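(* Let $A$ and $B$ be automata. (1) If $(b,n)$ is a normed backward simulation from $A$ to $B$, then $b$ is a branching backward simulation from $A$ to $B$. (2) If $b$ is a branching backward simulation from $A$ to $B$, define $n:(\mathrm{steps}(A)\cup\mathrm{start}(A))\times\mathrm{states}(B)\to\mathbb{N}$ as follows: for $s\in\mathrm{start}(A)$, $n(s,u)=0$ if $u\notin b[s]$ and otherwise $n(s,u)$ is the minimal length (number of steps) of an execution of $B$ that ends in $u$ and is $b$-related to the one-state execution $s$ of $A$; for a step $t\xrightarrow{a}_A s$, $n(t\xrightarrow{a}s,u)=0$ if $u\notin b[s]$ and otherwise $n(t\xrightarrow{a}s,u)$ is the minimal length of an execution fragment of $B$ that ends in $u$ and is $b$-related to the execution fragment $t\,a\,s$ of $A$. Then $(b,n)$ is a normed backward simulation from $A$ to $B$ (with $\mathbb{N}$ ordered by $<$).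
   Context: An automaton $A$ consists of a set $\mathrm{states}(A)$ of states, a nonempty set $\mathrm{start}(A)\subseteq\mathrm{states}(A)$ of start states, a set $\mathrm{acts}(A)$ of actions containing a distinguished internal action $\tau$, and a set $\mathrm{steps}(A)\subseteq\mathrm{states}(A)\times\mathrm{acts}(A)\times\mathrm{states}(A)$ of steps; write $s\xrightarrow{a}_A t$ for $(s,a,t)\in\mathrm{steps}(A)$. An execution fragment of $A$ is a finite or infinite alternating sequence $s_0a_1s_1a_2s_2\cdots$ of states and actions, beginning with a state and, if finite, ending with a state, such that $s_{i-1}\xrightarrow{a_i}_A s_i$ for all $i>0$; its index set $\mathrm{Index}(\alpha)$ is the set of indices $i$ of its states $s_i$. An execution is an execution fragment whose first state is a start state. For a relation $R$ write $R[s]=\{u\mid (s,u)\in R\}$. Execution correspondence: Let $R\subseteq\mathrm{states}(A)\times\mathrm{states}(B)$ and let $\alpha=s_0a_1s_1\cdots$ and $\alpha'=u_0b_1u_1\cdots$ be execution fragments of $A$ and $B$. An index relation over $R$ between $\alpha$ and $\alpha'$ is a relation $I\subseteq\mathrm{Index}(\alpha)\times\mathrm{Index}(\alpha')$ such that (1) $(i,j)\in I$ implies $(s_i,u_j)\in R$; (2) $(i,j)\in I$, $(i',j')\in I$ and $i<i'$ imply $j\le j'$; (3) every index of $\alpha$ is related by $I$ to some index of $\alpha'$ and every index of $\alpha'$ is related by $I$ to some index of $\alpha$; (4) if $(i,j),(i+1,j+1)\in I$ then $a_{i+1}=b_{j+1}$; if $(i,j),(i+1,j)\in I$ then $a_{i+1}=\tau$;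 if $(i,j),(i,j+1)\in I$ then $b_{j+1}=\tau$. The fragments $\alpha,\alpha'$ are $R$-related, written $(\alpha,\alpha')\in R$, if such an $I$ exists. A normed backward simulation from $A$ to $B$ is a pair $(b,n)$ where $b\subseteq\mathrm{states}(A)\times\mathrm{states}(B)$ is total (every $s\in\mathrm{states}(A)$ has $b[s]\neq\emptyset$) and $n:(\mathrm{steps}(A)\cup\mathrm{start}(A))\times\mathrm{states}(B)\to S$ for some set $S$ with a well-founded strict order $<$, such that: (1) if $s\in\mathrm{start}(A)$ and $u\in b[s]$ then (a) $u\in\mathrm{start}(B)$, or (b) there is $v\in b[s]$ with $v\xrightarrow{\tau}_B u$ and $n(s,v)<n(s,u)$; (2) if $t\xrightarrow{a}_A s$ and $u\in b[s]$ then (a) $u\in b[t]$ and $a=\tau$, or (b) there is $v\in b[t]$ with $v\xrightarrow{a}_B u$, or (c) there is $v\in b[s]$ with $v\xrightarrow{\tau}_B u$ and $n(t\xrightarrow{a}s,v)<n(t\xrightarrow{a}s,u)$. A branching backward simulation from $A$ to $B$ is a total relation $b\subseteq\mathrm{states}(A)\times\mathrm{states}(B)$ such that (1) if $s\in\mathrm{start}(A)$ and $u\in b[s]$ then $B$ has an execution that ends in $u$ and is $b$-related to the one-state execution $s$ of $A$; (2) if $t\xrightarrow{a}_A s$ and $u\in b[s]$ then $B$ has an execution fragment that ends in $u$ and is $b$-related to the execution fragment $t\,a\,s$ of $A$. *)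

theory Defs
  imports Main "HOL-Library.Extended_Nat"
begin

text \<open>Automata. The distinguished internal action tau is passed as an explicit
parameter shared by the automata being compared.\<close>

record ('s, 'a) automaton =
  states :: "'s set"
  start  :: "'s set"
  acts   :: "'a set"
  steps  :: "('s \<times> 'a \<times> 's) set"

definition is_automaton :: "'a \<Rightarrow> ('s, 'a) automaton \<Rightarrow> bool" where
  "is_automaton tau A \<longleftrightarrow>
     start A \<noteq> {} \<and> start A \<subseteq> states A \<and> tau \<in> acts A \<and>
     steps A \<subseteq> states A \<times> acts A \<times> states A"

text \<open>An execution fragment s0 a1 s1 a2 s2 ... is represented by its state sequence
(index i gives s_i), its action sequence (index i gives a_i, i >= 1; index 0 unused)
and its length (number of steps, possibly infinite). Values beyond the length are
irrelevant.\<close>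

record ('s, 'a) frag =
  fst_st :: "nat \<Rightarrow> 's"
  fst_act :: "nat \<Rightarrow> 'a"
  flen :: enat

definition Index :: "('s, 'a) frag \<Rightarrow> nat set" where
  "Index \<alpha> = {i. enat i \<le> flen \<alpha>}"

definition is_frag :: "('s, 'a) automaton \<Rightarrow> ('s, 'a) frag \<Rightarrow> bool" where
  "is_frag A \<alpha> \<longleftrightarrow>
     fst_st \<alpha> 0 \<in> states A \<and>
     (\<forall>i. 0 < i \<and> i \<in> Index \<alpha> \<longrightarrow>
        (fst_st \<alpha> (i - 1), fst_act \<alpha> i, fst_st \<alpha> i) \<in> steps A)"

definition is_exec :: "('s, 'a) automaton \<Rightarrow> ('s, 'a) frag \<Rightarrow> bool" where
  "is_exec A \<alpha> \<longleftrightarrow> is_frag A \<alpha> \<and> fst_st \<alpha> 0 \<in> start A"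

definition ends_in_len :: "('s, 'a) frag \<Rightarrow> nat \<Rightarrow> 's \<Rightarrow> bool" where
  "ends_in_len \<alpha> k u \<longleftrightarrow> flen \<alpha> = enat k \<and> fst_st \<alpha> k = u"

definition ends_in :: "('s, 'a) frag \<Rightarrow> 's \<Rightarrow> bool" where
  "ends_in \<alpha> u \<longleftrightarrow> (\<exists>k. ends_in_len \<alpha> k u)"

definition single_frag :: "'a \<Rightarrow> 's \<Rightarrow> ('s, 'a) frag" where
  "single_frag tau s = \<lparr>fst_st = (\<lambda>_. s), fst_act = (\<lambda>_. tau), flen = 0\<rparr>"

definition step_frag :: "'s \<Rightarrow> 'a \<Rightarrow> 's \<Rightarrow> ('s, 'a) frag" where
  "step_frag t a s = \<lparr>fst_st = (\<lambda>i. if i = 0 then t else s), fst_act = (\<lambda>_. a), flen = 1\<rparr>"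

definition index_rel ::
  "'a \<Rightarrow> ('s \<times> 't) set \<Rightarrow> ('s, 'a) frag \<Rightarrow> ('t, 'a) frag \<Rightarrow> (nat \<times> nat) set \<Rightarrow> bool" where
  "index_rel tau R \<alpha> \<alpha>' I \<longleftrightarrow>
     I \<subseteq> Index \<alpha> \<times> Index \<alpha>' \<and>
     (\<forall>i j. (i, j) \<in> I \<longrightarrow> (fst_st \<alpha> i, fst_st \<alpha>' j) \<in> R) \<and>
     (\<forall>i j i' j'. (i, j) \<in> I \<and> (i', j') \<in> I \<and> i < i' \<longrightarrow> j \<le> j') \<and>
     (\<forall>i \<in> Index \<alpha>. \<exists>j. (i, j) \<in> I) \<and>
     (\<forall>j \<in> Index \<alpha>'. \<exists>i. (i, j) \<in> I) \<and>
     (\<forall>i j. (i, j) \<in> I \<and> (i + 1, j + 1) \<in> I \<longrightarrow> fst_act \<alpha> (i + 1) = fst_act \<alpha>' (j + 1)) \<and>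
     (\<forall>i j. (i, j) \<in> I \<and> (i + 1, j) \<in> I \<longrightarrow> fst_act \<alpha> (i + 1) = tau) \<and>
     (\<forall>i j. (i, j) \<in> I \<and> (i, j + 1) \<in> I \<longrightarrow> fst_act \<alpha>' (j + 1) = tau)"

definition frag_related ::
  "'a \<Rightarrow> ('s \<times> 't) set \<Rightarrow> ('s, 'a) frag \<Rightarrow> ('t, 'a) frag \<Rightarrow> bool" where
  "frag_related tau R \<alpha> \<alpha>' \<longleftrightarrow> (\<exists>I. index_rel tau R \<alpha> \<alpha>' I)"

definition total_rel :: "('s, 'a) automaton \<Rightarrow> ('t, 'a) automaton \<Rightarrow> ('s \<times> 't) set \<Rightarrow> bool" where
  "total_rel A B b \<longleftrightarrow> b \<subseteq> states A \<times> states B \<and> (\<forall>s \<in> states A. b `` {s} \<noteq> {})"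

text \<open>Norm functions are defined on (start(A) + steps(A)) x states(B):
Inl s stands for a start state s, Inr (t,a,s) for a step t -a-> s.
The well-founded strict order on the codomain is the parameter lt.\<close>

definition normed_bsim ::
  "'a \<Rightarrow> ('s, 'a) automaton \<Rightarrow> ('t, 'a) automaton \<Rightarrow> ('s \<times> 't) set
   \<Rightarrow> ('o \<Rightarrow> 'o \<Rightarrow> bool) \<Rightarrow> ('s + ('s \<times> 'a \<times> 's) \<Rightarrow> 't \<Rightarrow> 'o) \<Rightarrow> bool" where
  "normed_bsim tau A B b lt n \<longleftrightarrow>
     total_rel A B b \<and>
     (\<forall>s \<in> start A. \<forall>u \<in> b `` {s}.
        u \<in> start B \<or>
        (\<exists>v \<in> b `` {s}. (v, tau, u) \<in> steps B \<and> lt (n (Inl s) v) (n (Inl s) u))) \<and>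
     (\<forall>t a s u. (t, a, s) \<in> steps A \<and> u \<in> b `` {s} \<longrightarrow>
        (u \<in> b `` {t} \<and> a = tau) \<or>
        (\<exists>v \<in> b `` {t}. (v, a, u) \<in> steps B) \<or>
        (\<exists>v \<in> b `` {s}. (v, tau, u) \<in> steps B \<and>
            lt (n (Inr (t, a, s)) v) (n (Inr (t, a, s)) u)))"

definition branching_bsim ::
  "'a \<Rightarrow> ('s, 'a) automaton \<Rightarrow> ('t, 'a) automaton \<Rightarrow> ('s \<times> 't) set \<Rightarrow> bool" where
  "branching_bsim tau A B b \<longleftrightarrow>
     total_rel A B b \<and>
     (\<forall>s \<in> start A. \<forall>u \<in> b `` {s}.
        \<exists>\<alpha>'. is_exec B \<alpha>' \<and> ends_in \<alpha>' u \<and> frag_related tau b (single_frag tau s) \<alpha>') \<and>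
     (\<forall>t a s u. (t, a, s) \<in> steps A \<and> u \<in> b `` {s} \<longrightarrow>
        (\<exists>\<alpha>'. is_frag B \<alpha>' \<and> ends_in \<alpha>' u \<and> frag_related tau b (step_frag t a s) \<alpha>'))"

definition branching_norm ::
  "'a \<Rightarrow> ('s, 'a) automaton \<Rightarrow> ('t, 'a) automaton \<Rightarrow> ('s \<times> 't) set
   \<Rightarrow> ('s + ('s \<times> 'a \<times> 's) \<Rightarrow> 't \<Rightarrow> nat)" where
  "branching_norm tau A B b x u =
     (case x of
        Inl s \<Rightarrow> (if u \<notin> b `` {s} then 0 else
          (LEAST k. \<exists>\<alpha>'. is_exec B \<alpha>' \<and> ends_in_len \<alpha>' k u \<and>
                          frag_related tau b (single_frag tau s) \<alpha>'))
      | Inr (t, a, s) \<Rightarrow> (if u \<notin> b `` {s} then 0 else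
          (LEAST k. \<exists>\<alpha>'. is_frag B \<alpha>' \<and> ends_in_len \<alpha>' k u \<and>
                          frag_related tau b (step_frag t a s) \<alpha>')))"

end

theory Submission
  imports Defs
begin

(* (1) For a fixed start state or step of A with final state s, proceed by well-founded
   induction on the norm of u in b[s]. Either the normed simulation matches u directly (u is a
   start state of B, or a single state or a single step of B matches the step of A), or u is
   reached by a tau-step from some v in b[s] of smaller norm; a related fragment ending in v
   is then extended by that tau-step, its new final index being paired with the final index
   of the fragment of A.
   (2) Take a shortest related fragment ending in u. If it is nonempty and its second-to-last
   index is still paired with the final index of the fragment of A, its last step is a
   tau-step from some v in b[s], and dropping that step leaves a shorter related fragment
   ending in v: the norm decreases. Otherwise the fragment is trivial, or its last step is
   paired with the step of A; these cases give the remaining clauses. *)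

lemma Index_enat: "flen \<alpha> = enat k \<Longrightarrow> Index \<alpha> = {..k}"
  by (auto simp: Index_def)

lemma flen_single_frag: "flen (single_frag tau s) = enat 0"
  by (simp add: single_frag_def zero_enat_def)

lemma flen_step_frag: "flen (step_frag t a s) = enat 1"
  by (simp add: step_frag_def one_enat_def)

lemma Index_single_frag [simp]: "Index (single_frag tau s) = {0}"
  by (simp add: Index_enat[OF flen_single_frag])

lemma Index_step_frag [simp]: "Index (step_frag t a s) = {0, 1}"
  by (auto simp: Index_enat[OF flen_step_frag])

lemma single_frag_simps [simp]:
  "fst_st (single_frag tau s) i = s" "fst_act (single_frag tau s) i = tau"
  by (simp_all add: single_frag_def)

lemma step_frag_simps [simp]:
  "fst_st (step_frag t a s) 0 = t" "fst_st (step_frag t a s) (Suc i) = s"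
  "fst_act (step_frag t a s) i = a"
  by (simp_all add: step_frag_def)

definition frag_snoc :: "('s, 'a) frag \<Rightarrow> nat \<Rightarrow> 'a \<Rightarrow> 's \<Rightarrow> ('s, 'a) frag" where
  "frag_snoc \<alpha> k c u =
     \<lparr>fst_st = (fst_st \<alpha>)(Suc k := u), fst_act = (fst_act \<alpha>)(Suc k := c), flen = enat (Suc k)\<rparr>"

lemma frag_snoc_simps [simp]:
  "j \<le> k \<Longrightarrow> fst_st (frag_snoc \<alpha> k c u) j = fst_st \<alpha> j"
  "j \<le> k \<Longrightarrow> fst_act (frag_snoc \<alpha> k c u) j = fst_act \<alpha> j"
  "fst_st (frag_snoc \<alpha> k c u) (Suc k) = u"
  "fst_act (frag_snoc \<alpha> k c u) (Suc k) = c"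
  "flen (frag_snoc \<alpha> k c u) = enat (Suc k)"
  by (simp_all add: frag_snoc_def)

lemma is_frag_snoc:
  assumes "is_frag B \<alpha>" "flen \<alpha> = enat k" "(fst_st \<alpha> k, c, u) \<in> steps B"
  shows "is_frag B (frag_snoc \<alpha> k c u)"
  using assms unfolding is_frag_def frag_snoc_def by (auto simp: Index_def)

lemma is_exec_snoc:
  "is_exec B \<alpha> \<Longrightarrow> flen \<alpha> = enat k \<Longrightarrow> (fst_st \<alpha> k, c, u) \<in> steps B \<Longrightarrow> is_exec B (frag_snoc \<alpha> k c u)"
  by (simp add: is_exec_def is_frag_snoc)

lemma is_frag_butlast:
  "is_frag B \<alpha> \<Longrightarrow> flen \<alpha> = enat (Suc k) \<Longrightarrow> is_frag B (\<alpha>\<lparr>flen := enat k\<rparr>)"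
  unfolding is_frag_def by (auto simp: Index_def)

lemma is_exec_butlast:
  "is_exec B \<alpha> \<Longrightarrow> flen \<alpha> = enat (Suc k) \<Longrightarrow> is_exec B (\<alpha>\<lparr>flen := enat k\<rparr>)"
  by (simp add: is_exec_def is_frag_butlast)

lemma is_frag_last_step:
  "is_frag B \<alpha> \<Longrightarrow> flen \<alpha> = enat (Suc k) \<Longrightarrow>
     (fst_st \<alpha> k, fst_act \<alpha> (Suc k), fst_st \<alpha> (Suc k)) \<in> steps B"
  unfolding is_frag_def Index_def by (metis diff_Suc_1 mem_Collect_eq order_refl zero_less_Suc)

lemma is_frag_single_frag: "u \<in> states B \<Longrightarrow> is_frag B (single_frag tau u)"
  by (auto simp: is_frag_def single_frag_def Index_def zero_enat_def)

lemma is_frag_step_frag: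
  "(v, c, u) \<in> steps B \<Longrightarrow> v \<in> states B \<Longrightarrow> is_frag B (step_frag v c u)"
  by (auto simp: is_frag_def step_frag_def Index_def one_enat_def)

lemma ends_in_single_frag: "ends_in (single_frag tau u) u"
  by (auto simp: ends_in_def ends_in_len_def single_frag_def zero_enat_def)

lemma ends_in_step_frag: "ends_in (step_frag v c u) u"
  by (auto simp: ends_in_def ends_in_len_def step_frag_def one_enat_def)

lemma ends_in_len_snoc: "ends_in_len (frag_snoc \<alpha> k c u) (Suc k) u"
  by (simp add: ends_in_len_def)

lemma index_rel_related: "index_rel tau R \<alpha> \<alpha>' I \<Longrightarrow> (i, j) \<in> I \<Longrightarrow> (fst_st \<alpha> i, fst_st \<alpha>' j) \<in> R"
  unfolding index_rel_def by blast

lemma index_rel_mono: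
  "index_rel tau R \<alpha> \<alpha>' I \<Longrightarrow> (i, j) \<in> I \<Longrightarrow> (i', j') \<in> I \<Longrightarrow> i < i' \<Longrightarrow> j \<le> j'"
  unfolding index_rel_def by blast

lemma index_rel_left_total: "index_rel tau R \<alpha> \<alpha>' I \<Longrightarrow> i \<in> Index \<alpha> \<Longrightarrow> \<exists>j. (i, j) \<in> I"
  unfolding index_rel_def by blast

lemma index_rel_right_total: "index_rel tau R \<alpha> \<alpha>' I \<Longrightarrow> j \<in> Index \<alpha>' \<Longrightarrow> \<exists>i. (i, j) \<in> I"
  unfolding index_rel_def by blast

lemma index_rel_Index: "index_rel tau R \<alpha> \<alpha>' I \<Longrightarrow> (i, j) \<in> I \<Longrightarrow> i \<in> Index \<alpha> \<and> j \<in> Index \<alpha>'"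
  unfolding index_rel_def by blast

lemma index_rel_act_sync:
  "index_rel tau R \<alpha> \<alpha>' I \<Longrightarrow> (i, j) \<in> I \<Longrightarrow> (Suc i, Suc j) \<in> I \<Longrightarrow>
     fst_act \<alpha> (Suc i) = fst_act \<alpha>' (Suc j)"
  unfolding index_rel_def by simp

lemma index_rel_act_stutter_right:
  "index_rel tau R \<alpha> \<alpha>' I \<Longrightarrow> (i, j) \<in> I \<Longrightarrow> (Suc i, j) \<in> I \<Longrightarrow> fst_act \<alpha> (Suc i) = tau"
  unfolding index_rel_def Suc_eq_plus1 by blast

lemma index_rel_act_stutter_left:
  "index_rel tau R \<alpha> \<alpha>' I \<Longrightarrow> (i, j) \<in> I \<Longrightarrow> (i, Suc j) \<in> I \<Longrightarrow> fst_act \<alpha>' (Suc j) = tau"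
  unfolding index_rel_def by simp

lemma index_rel_last:
  assumes I: "index_rel tau R \<alpha> \<alpha>' I" and "flen \<alpha> = enat m" "flen \<alpha>' = enat k"
  shows "(m, k) \<in> I"
proof -
  have Index: "Index \<alpha> = {..m}" "Index \<alpha>' = {..k}"
    using assms by (simp_all add: Index_enat)
  obtain i where i: "(i, k) \<in> I" using index_rel_right_total[OF I, of k] Index by blast
  obtain j where j: "(m, j) \<in> I" using index_rel_left_total[OF I, of m] Index by blast
  have "i \<le> m" "j \<le> k" using index_rel_Index[OF I i] index_rel_Index[OF I j] Index by auto
  show ?thesis
  proof (cases "i = m")
    case False
    with \<open>i \<le> m\<close> have "k \<le> j" using index_rel_mono[OF I i j] by simp
    with \<open>j \<le> k\<close> j show ?thesis by simp
  qed (use i in simp)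
qed

lemma index_rel_snoc_tau:
  assumes I: "index_rel tau R \<alpha> \<alpha>' I" and m: "flen \<alpha> = enat m" and k: "flen \<alpha>' = enat k"
    and u: "(fst_st \<alpha> m, u) \<in> R"
  shows "index_rel tau R \<alpha> (frag_snoc \<alpha>' k tau u) (insert (m, Suc k) I)"
proof -
  have mk: "(m, k) \<in> I" using index_rel_last[OF I m k] .
  have bound: "i \<le> m \<and> j \<le> k" if "(i, j) \<in> I" for i j
    using index_rel_Index[OF I that] m k by (simp add: Index_def)
  have stutter: "fst_act \<alpha> m = tau" if "(i, k) \<in> I" "Suc i = m" for i
    using index_rel_act_stutter_right[OF I that(1)] mk that(2) by simp
  let ?e = "frag_snoc \<alpha>' k tau u" and ?J = "insert (m, Suc k) I"
  have Index_e: "Index ?e = {..Suc k}" by (simp add: Index_enat)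
  have "?J \<subseteq> Index \<alpha> \<times> Index ?e"
    using bound by (auto simp: Index_enat[OF m] Index_e dest: le_SucI)
  moreover have "\<forall>i j. (i, j) \<in> ?J \<longrightarrow> (fst_st \<alpha> i, fst_st ?e j) \<in> R"
    using index_rel_related[OF I] bound u by auto
  moreover have "\<forall>i j i' j'. (i, j) \<in> ?J \<and> (i', j') \<in> ?J \<and> i < i' \<longrightarrow> j \<le> j'"
    using index_rel_mono[OF I] bound by fastforce
  moreover have "\<forall>i \<in> Index \<alpha>. \<exists>j. (i, j) \<in> ?J"
    using index_rel_left_total[OF I] by blast
  moreover have "\<forall>j \<in> Index ?e. \<exists>i. (i, j) \<in> ?J"
    using index_rel_right_total[OF I] by (auto simp: Index_e Index_enat[OF k] le_Suc_eq)
  moreover have "\<forall>i j. (i, j) \<in> ?J \<and> (i + 1, j + 1) \<in> ?J \<longrightarrow> fst_act \<alpha> (i + 1) = fst_act ?e (j + 1)"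
    using index_rel_act_sync[OF I] bound stutter by fastforce
  moreover have "\<forall>i j. (i, j) \<in> ?J \<and> (i + 1, j) \<in> ?J \<longrightarrow> fst_act \<alpha> (i + 1) = tau"
    using index_rel_act_stutter_right[OF I] bound by fastforce
  moreover have "\<forall>i j. (i, j) \<in> ?J \<and> (i, j + 1) \<in> ?J \<longrightarrow> fst_act ?e (j + 1) = tau"
    using index_rel_act_stutter_left[OF I] bound by fastforce
  ultimately show ?thesis unfolding index_rel_def by blast
qed

lemma index_rel_butlast:
  assumes I: "index_rel tau R \<alpha> \<alpha>' I" and m: "flen \<alpha> = enat m"
    and k: "flen \<alpha>' = enat (Suc k)" and mk: "(m, k) \<in> I"
  shows "index_rel tau R \<alpha> (\<alpha>'\<lparr>flen := enat k\<rparr>) (I \<inter> UNIV \<times> {..k})"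
proof -
  let ?e = "\<alpha>'\<lparr>flen := enat k\<rparr>" and ?J = "I \<inter> UNIV \<times> {..k}"
  have Index_e: "Index ?e = {..k}" by (simp add: Index_enat)
  have left: "\<exists>j \<le> k. (i, j) \<in> I" if i: "i \<in> Index \<alpha>" for i
  proof (cases "i = m")
    case False
    with i m have "i < m" by (simp add: Index_def)
    moreover obtain j where "(i, j) \<in> I" using index_rel_left_total[OF I i] by blast
    ultimately show ?thesis using index_rel_mono[OF I _ mk] by blast
  qed (use mk in blast)
  moreover have "\<forall>j \<in> Index ?e. \<exists>i. (i, j) \<in> ?J"
    using index_rel_right_total[OF I] by (auto simp: Index_e Index_enat[OF k])
  ultimately show ?thesis
    using I unfolding index_rel_def Index_e by (auto dest: left)
qed

lemma frag_related_single_single: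
  "(s, u) \<in> R \<Longrightarrow> frag_related tau R (single_frag tau s) (single_frag tau u)"
  unfolding frag_related_def
  by (rule exI[of _ "{(0, 0)}"]) (simp add: index_rel_def)

lemma frag_related_step_single:
  "(t, u) \<in> R \<Longrightarrow> (s, u) \<in> R \<Longrightarrow> frag_related tau R (step_frag t tau s) (single_frag tau u)"
  unfolding frag_related_def
  by (rule exI[of _ "{(0, 0), (1, 0)}"]) (auto simp: index_rel_def)

lemma frag_related_step_step:
  "(t, v) \<in> R \<Longrightarrow> (s, u) \<in> R \<Longrightarrow> frag_related tau R (step_frag t a s) (step_frag v a u)"
  unfolding frag_related_def
  by (rule exI[of _ "{(0, 0), (1, 1)}"]) (auto simp: index_rel_def)

lemma related_frag_by_descent:
  fixes lt :: "'o \<Rightarrow> 'o \<Rightarrow> bool" and f :: "'t \<Rightarrow> 'o" and P :: "('t, 'a) frag \<Rightarrow> bool"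
  assumes wf: "wfP lt" and m: "flen \<alpha> = enat m" "fst_st \<alpha> m = s"
    and P_snoc: "\<And>\<alpha>' k u. P \<alpha>' \<Longrightarrow> flen \<alpha>' = enat k \<Longrightarrow> (fst_st \<alpha>' k, tau, u) \<in> steps B \<Longrightarrow>
                   P (frag_snoc \<alpha>' k tau u)"
    and descent: "\<And>u. u \<in> R `` {s} \<Longrightarrow>
                   (\<exists>\<alpha>'. P \<alpha>' \<and> ends_in \<alpha>' u \<and> frag_related tau R \<alpha> \<alpha>') \<or>
                   (\<exists>v \<in> R `` {s}. (v, tau, u) \<in> steps B \<and> lt (f v) (f u))"
    and u: "u \<in> R `` {s}"
  shows "\<exists>\<alpha>'. P \<alpha>' \<and> ends_in \<alpha>' u \<and> frag_related tau R \<alpha> \<alpha>'"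
proof -
  have "wfP (\<lambda>v u. lt (f v) (f u))"
    using wfp_if_convertible_to_wfp[OF wf] .
  then show ?thesis
    using u
  proof (induction u rule: wfp_induct_rule)
    case (less u)
    from descent[OF less.prems] show ?case
    proof (elim disjE bexE conjE)
      fix v assume v: "v \<in> R `` {s}" and step: "(v, tau, u) \<in> steps B" and "lt (f v) (f u)"
      with less.IH obtain \<alpha>' k I where
        \<alpha>': "P \<alpha>'" "ends_in_len \<alpha>' k v" and I: "index_rel tau R \<alpha> \<alpha>' I"
        unfolding ends_in_def frag_related_def by blast
      then have k: "flen \<alpha>' = enat k" and "fst_st \<alpha>' k = v"
        by (simp_all add: ends_in_len_def)
      have "index_rel tau R \<alpha> (frag_snoc \<alpha>' k tau u) (insert (m, Suc k) I)"
        using index_rel_snoc_tau[OF I m(1) k] m(2) less.prems by simp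
      moreover have "P (frag_snoc \<alpha>' k tau u)"
        using P_snoc[OF \<alpha>'(1) k] step \<open>fst_st \<alpha>' k = v\<close> by simp
      ultimately show ?case
        using ends_in_len_snoc[of \<alpha>' k tau u] unfolding ends_in_def frag_related_def by blast
    qed
  qed
qed

definition least_related_len ::
  "(('t, 'a) frag \<Rightarrow> bool) \<Rightarrow> 'a \<Rightarrow> ('s \<times> 't) set \<Rightarrow> ('s, 'a) frag \<Rightarrow> 't \<Rightarrow> nat" where
  "least_related_len P tau R \<alpha> u =
     (LEAST k. \<exists>\<alpha>'. P \<alpha>' \<and> ends_in_len \<alpha>' k u \<and> frag_related tau R \<alpha> \<alpha>')"

lemma least_related_len_witness:
  assumes "\<exists>\<alpha>'. P \<alpha>' \<and> ends_in \<alpha>' u \<and> frag_related tau R \<alpha> \<alpha>'"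
  obtains \<alpha>' I where "P \<alpha>'" "ends_in_len \<alpha>' (least_related_len P tau R \<alpha> u) u"
    "index_rel tau R \<alpha> \<alpha>' I"
proof -
  from assms have "\<exists>k \<alpha>'. P \<alpha>' \<and> ends_in_len \<alpha>' k u \<and> frag_related tau R \<alpha> \<alpha>'"
    unfolding ends_in_def by blast
  from LeastI_ex[OF this] show ?thesis
    using that unfolding least_related_len_def frag_related_def by blast
qed

lemma least_related_len_le:
  "P \<alpha>' \<Longrightarrow> ends_in_len \<alpha>' k u \<Longrightarrow> frag_related tau R \<alpha> \<alpha>' \<Longrightarrow> least_related_len P tau R \<alpha> u \<le> k"
  unfolding least_related_len_def by (blast intro: Least_le)

lemma least_related_len_tau_descent:
  assumes P_butlast: "\<And>\<alpha>' k. P \<alpha>' \<Longrightarrow> flen \<alpha>' = enat (Suc k) \<Longrightarrow> P (\<alpha>'\<lparr>flen := enat k\<rparr>)"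
    and \<alpha>': "is_frag B \<alpha>'" "P \<alpha>'" "ends_in_len \<alpha>' (Suc k) u"
    and least: "least_related_len P tau R \<alpha> u = Suc k"
    and I: "index_rel tau R \<alpha> \<alpha>' I" and m: "flen \<alpha> = enat m" and mk: "(m, k) \<in> I"
  shows "fst_st \<alpha>' k \<in> R `` {fst_st \<alpha> m} \<and> (fst_st \<alpha>' k, tau, u) \<in> steps B \<and>
         least_related_len P tau R \<alpha> (fst_st \<alpha>' k) < least_related_len P tau R \<alpha> u"
proof -
  have k: "flen \<alpha>' = enat (Suc k)" and "fst_st \<alpha>' (Suc k) = u"
    using \<alpha>'(3) by (simp_all add: ends_in_len_def)
  have "(m, Suc k) \<in> I" using index_rel_last[OF I m k] .
  then have "fst_act \<alpha>' (Suc k) = tau"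
    using index_rel_act_stutter_left[OF I mk] by simp
  then have step: "(fst_st \<alpha>' k, tau, u) \<in> steps B"
    using is_frag_last_step[OF \<alpha>'(1) k] \<open>fst_st \<alpha>' (Suc k) = u\<close> by simp
  have "frag_related tau R \<alpha> (\<alpha>'\<lparr>flen := enat k\<rparr>)"
    using index_rel_butlast[OF I m k mk] unfolding frag_related_def by blast
  moreover have "ends_in_len (\<alpha>'\<lparr>flen := enat k\<rparr>) k (fst_st \<alpha>' k)"
    by (simp add: ends_in_len_def)
  ultimately have "least_related_len P tau R \<alpha> (fst_st \<alpha>' k) \<le> k"
    using least_related_len_le P_butlast[OF \<alpha>'(2) k] by metis
  with step least index_rel_related[OF I mk] show ?thesis by simp
qed

lemma total_rel_ImageD: "total_rel A B b \<Longrightarrow> u \<in> b `` {s} \<Longrightarrow> u \<in> states B"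
  unfolding total_rel_def by blast

lemma normed_bsim_related_exec:
  assumes nb: "normed_bsim tau A B b lt n" and wf: "wfP lt"
    and s: "s \<in> start A" and u: "u \<in> b `` {s}"
  shows "\<exists>\<alpha>'. is_exec B \<alpha>' \<and> ends_in \<alpha>' u \<and> frag_related tau b (single_frag tau s) \<alpha>'"
proof (rule related_frag_by_descent[where P = "is_exec B" and m = 0 and f = "n (Inl s)"])
  show "u \<in> b `` {s}" by (rule u)
next
  fix w assume w: "w \<in> b `` {s}"
  have "w \<in> states B"
    using nb w by (auto simp: normed_bsim_def total_rel_ImageD)
  then have "w \<in> start B \<Longrightarrow> is_exec B (single_frag tau w)"
    by (simp add: is_exec_def is_frag_single_frag)
  then show "(\<exists>\<alpha>'. is_exec B \<alpha>' \<and> ends_in \<alpha>' w \<and> frag_related tau b (single_frag tau s) \<alpha>') \<or>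
      (\<exists>v \<in> b `` {s}. (v, tau, w) \<in> steps B \<and> lt (n (Inl s) v) (n (Inl s) w))"
    using nb s w ends_in_single_frag[of tau w] frag_related_single_single[of s w b tau]
    unfolding normed_bsim_def by blast
qed (simp_all add: wf is_exec_snoc flen_single_frag)

lemma normed_bsim_related_frag:
  assumes nb: "normed_bsim tau A B b lt n" and wf: "wfP lt"
    and st: "(t, a, s) \<in> steps A" and u: "u \<in> b `` {s}"
  shows "\<exists>\<alpha>'. is_frag B \<alpha>' \<and> ends_in \<alpha>' u \<and> frag_related tau b (step_frag t a s) \<alpha>'"
proof (rule related_frag_by_descent[where P = "is_frag B" and m = 1 and f = "n (Inr (t, a, s))"])
  show "u \<in> b `` {s}" by (rule u)
next
  have in_states: "x \<in> states B" if "x \<in> b `` {y}" for x y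
    using nb that by (auto simp: normed_bsim_def total_rel_ImageD)
  fix w assume w: "w \<in> b `` {s}"
  from nb st w have "(w \<in> b `` {t} \<and> a = tau) \<or> (\<exists>v \<in> b `` {t}. (v, a, w) \<in> steps B) \<or>
      (\<exists>v \<in> b `` {s}. (v, tau, w) \<in> steps B \<and> lt (n (Inr (t, a, s)) v) (n (Inr (t, a, s)) w))"
    unfolding normed_bsim_def by blast
  then show "(\<exists>\<alpha>'. is_frag B \<alpha>' \<and> ends_in \<alpha>' w \<and> frag_related tau b (step_frag t a s) \<alpha>') \<or>
      (\<exists>v \<in> b `` {s}. (v, tau, w) \<in> steps B \<and> lt (n (Inr (t, a, s)) v) (n (Inr (t, a, s)) w))"
  proof (elim disjE conjE bexE)
    assume "w \<in> b `` {t}" "a = tau"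
    then have "frag_related tau b (step_frag t a s) (single_frag tau w)"
      using w by (simp add: frag_related_step_single)
    then show ?thesis
      using is_frag_single_frag[OF in_states[OF w]] ends_in_single_frag[of tau w] by blast
  next
    fix v assume "v \<in> b `` {t}" "(v, a, w) \<in> steps B"
    then have "frag_related tau b (step_frag t a s) (step_frag v a w)"
      using w by (simp add: frag_related_step_step)
    then show ?thesis
      using is_frag_step_frag[OF \<open>(v, a, w) \<in> steps B\<close> in_states[OF \<open>v \<in> b `` {t}\<close>]]
        ends_in_step_frag[of v a w] by blast
  next
    fix v assume "v \<in> b `` {s}" "(v, tau, w) \<in> steps B" "lt (n (Inr (t, a, s)) v) (n (Inr (t, a, s)) w)"
    then show ?thesis by blast
  qed
qed (simp_all add: wf is_frag_snoc flen_step_frag)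

lemma normed_bsim_imp_branching_bsim:
  assumes wf: "wfP lt" and nb: "normed_bsim tau A B b lt n"
  shows "branching_bsim tau A B b"
proof -
  have "total_rel A B b" using nb by (simp add: normed_bsim_def)
  then show ?thesis
    unfolding branching_bsim_def
    using normed_bsim_related_exec[OF nb wf] normed_bsim_related_frag[OF nb wf] by blast
qed

lemma branching_norm_eq:
  "u \<in> b `` {s} \<Longrightarrow>
     branching_norm tau A B b (Inl s) u = least_related_len (is_exec B) tau b (single_frag tau s) u"
  "u \<in> b `` {s} \<Longrightarrow>
     branching_norm tau A B b (Inr (t, a, s)) u = least_related_len (is_frag B) tau b (step_frag t a s) u"
  by (simp_all add: branching_norm_def least_related_len_def)

lemma branching_bsim_norm_start:
  assumes bb: "branching_bsim tau A B b" and s: "s \<in> start A" and u: "u \<in> b `` {s}"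
  shows "u \<in> start B \<or>
    (\<exists>v \<in> b `` {s}. (v, tau, u) \<in> steps B \<and>
       branching_norm tau A B b (Inl s) v < branching_norm tau A B b (Inl s) u)"
proof -
  let ?L = "least_related_len (is_exec B) tau b (single_frag tau s)"
  have "\<exists>\<alpha>'. is_exec B \<alpha>' \<and> ends_in \<alpha>' u \<and> frag_related tau b (single_frag tau s) \<alpha>'"
    using bb s u unfolding branching_bsim_def by blast
  then obtain \<alpha>' I where \<alpha>': "is_exec B \<alpha>'" "ends_in_len \<alpha>' (?L u) u"
    and I: "index_rel tau b (single_frag tau s) \<alpha>' I"
    by (rule least_related_len_witness)
  show ?thesis
  proof (cases "?L u")
    case 0
    with \<alpha>' show ?thesis by (simp add: is_exec_def ends_in_len_def)
  next
    case (Suc k)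
    with \<alpha>'(2) have "k \<in> Index \<alpha>'" by (simp add: ends_in_len_def Index_def)
    then have "(0, k) \<in> I"
      using index_rel_right_total[OF I] index_rel_Index[OF I] by fastforce
    moreover have "is_frag B \<alpha>'" using \<alpha>'(1) by (simp add: is_exec_def)
    ultimately have "fst_st \<alpha>' k \<in> b `` {s} \<and> (fst_st \<alpha>' k, tau, u) \<in> steps B \<and> ?L (fst_st \<alpha>' k) < ?L u"
      using least_related_len_tau_descent[OF is_exec_butlast _ \<alpha>'(1) _ Suc I flen_single_frag] \<alpha>'(2) Suc
      by simp
    with u show ?thesis by (auto simp: branching_norm_eq)
  qed
qed

lemma branching_bsim_norm_step:
  assumes bb: "branching_bsim tau A B b" and st: "(t, a, s) \<in> steps A" and u: "u \<in> b `` {s}"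
  shows "(u \<in> b `` {t} \<and> a = tau) \<or>
    (\<exists>v \<in> b `` {t}. (v, a, u) \<in> steps B) \<or>
    (\<exists>v \<in> b `` {s}. (v, tau, u) \<in> steps B \<and>
       branching_norm tau A B b (Inr (t, a, s)) v < branching_norm tau A B b (Inr (t, a, s)) u)"
proof -
  let ?L = "least_related_len (is_frag B) tau b (step_frag t a s)"
  have "\<exists>\<alpha>'. is_frag B \<alpha>' \<and> ends_in \<alpha>' u \<and> frag_related tau b (step_frag t a s) \<alpha>'"
    using bb st u unfolding branching_bsim_def by blast
  then obtain \<alpha>' I where \<alpha>': "is_frag B \<alpha>'" "ends_in_len \<alpha>' (?L u) u"
    and I: "index_rel tau b (step_frag t a s) \<alpha>' I"
    by (rule least_related_len_witness)
  show ?thesis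
  proof (cases "?L u")
    case 0
    with \<alpha>'(2) have len: "flen \<alpha>' = enat 0" and "fst_st \<alpha>' 0 = u"
      by (simp_all add: ends_in_len_def)
    obtain j where "(0, j) \<in> I" using index_rel_left_total[OF I] by auto
    moreover from this have "j = 0"
      using index_rel_Index[OF I] by (simp add: Index_enat[OF len])
    moreover have "(Suc 0, 0) \<in> I" using index_rel_last[OF I flen_step_frag len] by simp
    ultimately show ?thesis
      using index_rel_related[OF I] index_rel_act_stutter_right[OF I] \<open>fst_st \<alpha>' 0 = u\<close> by force
  next
    case (Suc k)
    with \<alpha>'(2) have len: "flen \<alpha>' = enat (Suc k)" and "fst_st \<alpha>' (Suc k) = u"
      by (simp_all add: ends_in_len_def)
    obtain i where i: "(i, k) \<in> I"
      using index_rel_right_total[OF I, of k] by (auto simp: Index_enat[OF len])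
    then consider (paired_with_t) "i = 0" | (paired_with_s) "i = 1"
      using index_rel_Index[OF I] by fastforce
    then show ?thesis
    proof cases
      case paired_with_t
      have "(Suc 0, Suc k) \<in> I" using index_rel_last[OF I flen_step_frag len] by simp
      then have "fst_act \<alpha>' (Suc k) = a"
        using index_rel_act_sync[OF I] i paired_with_t by force
      then have "(fst_st \<alpha>' k, a, u) \<in> steps B"
        using is_frag_last_step[OF \<alpha>'(1) len] \<open>fst_st \<alpha>' (Suc k) = u\<close> by simp
      moreover have "fst_st \<alpha>' k \<in> b `` {t}" using index_rel_related[OF I i] paired_with_t by simp
      ultimately show ?thesis by blast
    next
      case paired_with_s
      have "fst_st \<alpha>' k \<in> b `` {s} \<and> (fst_st \<alpha>' k, tau, u) \<in> steps B \<and> ?L (fst_st \<alpha>' k) < ?L u"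
        using least_related_len_tau_descent[OF is_frag_butlast \<alpha>'(1) \<alpha>'(1) _ Suc I flen_step_frag] \<alpha>'(2) Suc i paired_with_s
        by simp
      with u show ?thesis by (auto simp: branching_norm_eq)
    qed
  qed
qed

lemma branching_bsim_imp_normed_bsim:
  assumes bb: "branching_bsim tau A B b"
  shows "normed_bsim tau A B b (<) (branching_norm tau A B b)"
proof -
  have "total_rel A B b" using bb by (simp add: branching_bsim_def)
  then show ?thesis
    unfolding normed_bsim_def
    using branching_bsim_norm_start[OF bb] branching_bsim_norm_step[OF bb] by blast
qed

theorem mainTheorem9:
  fixes tau :: 'a
    and A :: "('s, 'a) automaton"
    and B :: "('t, 'a) automaton"
  assumes "is_automaton tau A" and "is_automaton tau B"
  shows "(\<forall>b (lt :: 'o \<Rightarrow> 'o \<Rightarrow> bool) n.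
            wfP lt \<and> transp lt \<and> normed_bsim tau A B b lt n \<longrightarrow> branching_bsim tau A B b)
       \<and> (\<forall>b. branching_bsim tau A B b \<longrightarrow>
            normed_bsim tau A B b (<) (branching_norm tau A B b))"
  by (auto intro: normed_bsim_imp_branching_bsim branching_bsim_imp_normed_bsim)

end
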